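(* Let $k\geq 2$, let $\mathbb Z_0=\mathbb Z\setminus\{0\}$, and let $z=\{z_j\}_{j\in\mathbb Z_0}$ be positive numbers such that $\sum_{j\in\mathbb Z_0}z_j$ converges with sum $A\neq\frac{1}{k-1}$. Then there exists a number $B>0$, $B\neq A$, satisfying $A(1+B)^k=B(1+A)^k$, which is the sum of a unique convergent series $\sum_{j\in\mathbb Z_0}\tilde z_j$ with $\tilde z\neq z$, and there is a unique sequence of positive parameters $\{\lambda_j\}_{j\in\mathbb Z_0}$, such that both $(z,\tilde z)$ and $(\tilde z,z)$ are solutions of the system $$u_i=\lambda_i\Bigl(\frac{1}{1+\sum_{j\in\mathbb Z_0}v_j}\Bigr)^{k},\qquad v_i=\lambda_i\Bigl(\frac{1}{1+\sum_{j\in\mathbb Z_0}u_j}\Bigr)^{k},\qquad i\in\mathbb Z_0,$$ in the unknowns $(u,v)$, where $\tilde z=\{\tilde z_j\}_{j\in\mathbb Z_0}$. *)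

theory Defs
  imports "HOL-Analysis.Analysis"
begin

definition Z0 :: "int set" where
  "Z0 = UNIV - {0}"

definition is_solution :: "nat \<Rightarrow> (int \<Rightarrow> real) \<Rightarrow> (int \<Rightarrow> real) \<Rightarrow> (int \<Rightarrow> real) \<Rightarrow> bool" where
  "is_solution k lam u v \<longleftrightarrow>
     u summable_on Z0 \<and> v summable_on Z0 \<and>
     (\<forall>i\<in>Z0. u i = lam i * (1 / (1 + infsum v Z0)) ^ k \<and>
              v i = lam i * (1 / (1 + infsum u Z0)) ^ k)"

end

theory Submission
  imports Defs
begin

text \<open>The function x / (1 + x)^k increases on ]-1, 1/(k-1)] and decreases afterwards, tending
  to 0; so each positive value A \<noteq> 1/(k-1) shares its level with a second positive point B,
  which is exactly the relation A (1 + B)^k = B (1 + A)^k.  Once the sums A and B of the two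
  unknown series are fixed, the system is linear in the unknowns: it forces
  lambda_j = z_j (1 + B)^k and z'_j = z_j ((1 + B) / (1 + A))^k, and these choices do solve it.
  This gives existence and uniqueness at once; the system is symmetric in (u, v).\<close>

definition hump :: "nat \<Rightarrow> real \<Rightarrow> real" where
  "hump k x = x / (1 + x) ^ k"

lemma DERIV_hump:
  assumes "x > -1" and "k \<ge> 1"
  shows "DERIV (hump k) x :> (1 - (real k - 1) * x) * (1 + x) ^ (k - 1) / ((1 + x) ^ k)\<^sup>2"
proof -
  have "DERIV (hump k) x :> ((1 + x) ^ k - x * (real k * (1 + x) ^ (k - 1))) / ((1 + x) ^ k)\<^sup>2"
    unfolding hump_def [abs_def] using assms
    by (auto intro!: derivative_eq_intros simp: power2_eq_square)
  moreover have "(1 + x) ^ k - x * (real k * (1 + x) ^ (k - 1)) = (1 - (real k - 1) * x) * (1 + x) ^ (k - 1)"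
    using assms by (cases k) (simp_all add: algebra_simps)
  ultimately show ?thesis
    by simp
qed

lemma continuous_on_hump: "S \<subseteq> {-1<..} \<Longrightarrow> continuous_on S (hump k)"
  unfolding hump_def [abs_def] by (intro continuous_intros) force

lemma hump_less_hump_peak:
  assumes "k \<ge> 2" and "x > -1" and "x \<noteq> 1 / (real k - 1)"
  shows "hump k x < hump k (1 / (real k - 1))"
proof -
  define c where "c = 1 / (real k - 1)"
  have k1: "real k - 1 \<ge> 1"
    using assms(1) by simp
  have c_pos: "c > 0"
    unfolding c_def using k1 by simp
  have deriv: "DERIV (hump k) y :> (1 - (real k - 1) * y) * ((1 + y) ^ (k - 1) / ((1 + y) ^ k)\<^sup>2)"
    and factor_pos: "(1 + y) ^ (k - 1) / ((1 + y) ^ k)\<^sup>2 > 0" if "y > -1" for y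
    using DERIV_hump[OF that] assms(1) that by simp_all
  show ?thesis
  proof (cases "x < c")
    case True
    have increasing: "\<exists>d. DERIV (hump k) y :> d \<and> d > 0" if "x < y" "y < c" for y
    proof -
      have "1 - (real k - 1) * y > 0"
        using that k1 unfolding c_def by (simp add: field_simps)
      moreover have "y > -1"
        using that assms(2) by linarith
      ultimately show ?thesis
        using deriv factor_pos mult_pos_pos by blast
    qed
    have "continuous_on {x..c} (hump k)"
      using assms(2) by (intro continuous_on_hump) auto
    from DERIV_pos_imp_increasing_open[OF True increasing this] show ?thesis
      unfolding c_def .
  next
    case False
    with assms(3) have "c < x"
      unfolding c_def by simp
    have decreasing: "\<exists>d. DERIV (hump k) y :> d \<and> d < 0" if "c < y" for y
    proof -
      have "1 - (real k - 1) * y < 0"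
        using that k1 unfolding c_def by (simp add: field_simps)
      moreover have "y > -1"
        using that c_pos by linarith
      ultimately show ?thesis
        using deriv factor_pos mult_neg_pos by blast
    qed
    have "continuous_on {c..x} (hump k)"
      using c_pos by (intro continuous_on_hump) auto
    from DERIV_neg_imp_decreasing_open[OF \<open>c < x\<close> decreasing this] show ?thesis
      unfolding c_def .
  qed
qed

lemma hump_le_inverse:
  assumes "k \<ge> 2" and "x > 0"
  shows "hump k x \<le> 1 / x"
proof -
  have "x * x \<le> (1 + x)\<^sup>2"
    using assms(2) by (simp add: power2_eq_square mult_mono)
  also have "\<dots> \<le> (1 + x) ^ k"
    using assms by (intro power_increasing) auto
  finally show ?thesis
    unfolding hump_def using assms(2) by (simp add: field_simps)
qed

lemma hump_level_second_point:
  assumes "k \<ge> 2" and "A > 0" and "A \<noteq> 1 / (real k - 1)"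
  obtains B where "B > 0" "B \<noteq> A" "hump k B = hump k A"
proof -
  define c where "c = 1 / (real k - 1)"
  have c_pos: "c > 0"
    unfolding c_def using assms(1) by simp
  have below_peak: "hump k A \<le> hump k c"
    unfolding c_def using hump_less_hump_peak[OF assms(1) _ assms(3)] assms(2) by simp
  have hump_A_pos: "hump k A > 0"
    unfolding hump_def using assms(2) by simp
  have cont: "continuous_on {a..b} (hump k)" if "a \<ge> 0" for a b
    using that by (intro continuous_on_hump) auto
  show thesis
  proof (cases "A < c")
    case True
    define M where "M = max c (1 / hump k A) + 1"
    have M: "M > 0" "c \<le> M" "M > 1 / hump k A"
      unfolding M_def using c_pos by auto
    then have "1 / M < hump k A"
      using hump_A_pos by (simp add: field_simps)
    then have "hump k M \<le> hump k A"
      using hump_le_inverse[OF assms(1) M(1)] by linarith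
    from IVT2'[OF this below_peak M(2) cont] c_pos
    obtain B where "c \<le> B" "hump k B = hump k A"
      by auto
    with True c_pos show thesis
      by (intro that[of B]) auto
  next
    case False
    have hump_0: "hump k 0 = 0"
      unfolding hump_def by simp
    with hump_A_pos have "hump k 0 \<le> hump k A"
      by simp
    from IVT'[OF this below_peak less_imp_le[OF c_pos] cont]
    obtain B where "0 \<le> B" "B \<le> c" "hump k B = hump k A"
      by auto
    moreover from this have "B \<noteq> 0"
      using hump_0 hump_A_pos by auto
    ultimately show thesis
      using False assms(3) unfolding c_def by (intro that[of B]) auto
  qed
qed

lemma has_sum_pos:
  fixes f :: "'a \<Rightarrow> 'b :: {ordered_ab_group_add, topological_ab_group_add, linorder_topology}"
  assumes "(f has_sum a) S" and "\<And>x. x \<in> S \<Longrightarrow> f x > 0" and "S \<noteq> {}"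
  shows "a > 0"
proof -
  from assms(3) obtain x where "x \<in> S"
    by blast
  with assms(2) show ?thesis
    by (intro has_sum_strict_mono[OF has_sum_0 assms(1), of _ x]) (auto intro: less_imp_le)
qed

lemma is_solution_swap: "is_solution k lam u v \<longleftrightarrow> is_solution k lam v u"
  unfolding is_solution_def by blast

lemma is_solution_iff_scaled:
  assumes "(u has_sum A) Z0" and "(v has_sum B) Z0" and "1 + B \<noteq> 0"
  shows "is_solution k lam u v \<longleftrightarrow>
    (\<forall>j\<in>Z0. lam j = u j * (1 + B) ^ k \<and> v j = u j * ((1 + B) / (1 + A)) ^ k)"
proof -
  have "infsum u Z0 = A" "infsum v Z0 = B"
    using assms(1,2) by (simp_all add: infsumI)
  moreover have "u summable_on Z0" "v summable_on Z0"
    using assms(1,2) by (auto simp: summable_on_def)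
  ultimately show ?thesis
    unfolding is_solution_def using assms(3)
    by (auto simp: power_one_over power_divide field_simps)
qed

theorem mainTheorem5:
  fixes k :: nat and z :: "int \<Rightarrow> real" and A :: real
  assumes "k \<ge> 2"
    and "\<forall>j\<in>Z0. z j > 0"
    and "(z has_sum A) Z0"
    and "A \<noteq> 1 / (real k - 1)"
  shows "\<exists>B::real. B > 0 \<and> B \<noteq> A \<and> A * (1 + B) ^ k = B * (1 + A) ^ k \<and>
           (\<exists>zt lam. (zt has_sum B) Z0 \<and> (\<exists>j\<in>Z0. zt j \<noteq> z j) \<and>
              (\<forall>j\<in>Z0. lam j > 0) \<and>
              is_solution k lam z zt \<and> is_solution k lam zt z \<and>
              (\<forall>zt' lam'. ((zt' has_sum B) Z0 \<and> (\<exists>j\<in>Z0. zt' j \<noteq> z j) \<and>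
                   (\<forall>j\<in>Z0. lam' j > 0) \<and>
                   is_solution k lam' z zt' \<and> is_solution k lam' zt' z)
                 \<longrightarrow> (\<forall>j\<in>Z0. zt' j = zt j \<and> lam' j = lam j)))"
proof -
  have one: "1 \<in> Z0"
    unfolding Z0_def by simp
  then have A_pos: "A > 0"
    using has_sum_pos[OF assms(3)] assms(2) by blast
  then obtain B where B: "B > 0" "B \<noteq> A" "hump k B = hump k A"
    using hump_level_second_point[OF assms(1) _ assms(4)] by blast
  then have level: "A * (1 + B) ^ k = B * (1 + A) ^ k"
    using A_pos by (simp add: hump_def field_simps)
  define r where "r = ((1 + B) / (1 + A)) ^ k"
  define zt where "zt j = z j * r" for j
  define lam where "lam j = z j * (1 + B) ^ k" for j
  have "A * r = B"
    unfolding r_def using level A_pos by (simp add: power_divide field_simps)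
  then have zt_sum: "(zt has_sum B) Z0"
    unfolding zt_def using has_sum_cmult_left[OF assms(3)] by metis
  have "r \<noteq> 1"
    unfolding r_def using level A_pos B(1,2) by (auto simp: power_divide)
  then have "zt 1 \<noteq> z 1"
    unfolding zt_def using assms(2) one by auto
  have solution: "is_solution k lam z zt"
    using is_solution_iff_scaled[OF assms(3) zt_sum] B(1) by (simp add: lam_def zt_def r_def)
  have unique: "\<forall>j\<in>Z0. zt' j = zt j \<and> lam' j = lam j"
    if "(zt' has_sum B) Z0" and "is_solution k lam' z zt'" for zt' lam'
    using is_solution_iff_scaled[OF assms(3) that(1)] that(2) B(1) by (simp add: lam_def zt_def r_def)
  have "\<forall>j\<in>Z0. lam j > 0"
    unfolding lam_def using assms(2) B(1) by simp
  with B(1,2) level zt_sum one \<open>zt 1 \<noteq> z 1\<close> solution unique show ?thesis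
    using is_solution_swap by blast
qed

end
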